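(* If $Q$ is a quantity space over a field $K$, then $Q$ is distributive: for all dimensions $\mathsf{A},\mathsf{B}\in Q/{\sim}$, all $x,y\in\mathsf{A}$ and all $z\in\mathsf{B}$ we have $(x+y)z=xz+yz$ and $z(x+y)=zx+zy$.
   Context: A scalable monoid over a (unital, associative) ring $R$ is a monoid $X$ (identity $1_X$, product written $xy$) together with a map $R\times X\to X$, $(\alpha,x)\mapsto\alpha\cdot x$, such that $1\cdot x=x$, $\alpha\cdot(\beta\cdot x)=\alpha\beta\cdot x$ and $\alpha\cdot(xy)=(\alpha\cdot x)y=x(\alpha\cdot y)$. A quantity space over a field $K$ is a commutative scalable monoid $Q$ over $K$ for which there exists a basis, i.e. a finite set $\{e_1,\ldots,e_n\}$ of invertible elements of $Q$ such that every $x\in Q$ has a unique expansion $x=\mu\cdot\prod_{i=1}^n e_i^{k_i}$ with $\mu\in K$ and $k_i\in\mathbb{Z}$. On $Q$, $x\sim y$ iff $\alpha\cdot x=\beta\cdot y$ for some $\alpha,\beta\in K$; classes are dimensions. A unit element for a class $\mathsf{C}$ is some $u\in\mathsf{C}$ such that every $x\in\mathsf{C}$ equals $\lambda\cdot u$ for some $\lambda\in K$ and $\lambda\cdot u=\lambda'\cdot u$ implies $\lambda=\lambda'$. If $u$ is a unit element for $\mathsf{C}$ and $x=\rho\cdot u$, $y=\sigma\cdot u$, then $x+y:=(\rho+\sigma)\cdot u$ (independent of the choice of $u$); every dimension of a quantity space has a unit element, so this sum is defined for any two elements of the same dimension. *)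

theory Defs
  imports Main
begin

text \<open>The monoid X is modelled as a type of class comm_monoid_mult (carrier = whole type);
  the scalar action R x X -> X is the parameter s.\<close>

definition scalable_monoid :: "('k::ring_1 \<Rightarrow> 'q::monoid_mult \<Rightarrow> 'q) \<Rightarrow> bool" where
  "scalable_monoid s \<longleftrightarrow>
     (\<forall>x. s 1 x = x) \<and>
     (\<forall>a b x. s a (s b x) = s (a * b) x) \<and>
     (\<forall>a x y. s a (x * y) = s a x * y \<and> s a (x * y) = x * s a y)"

definition invertible :: "'q::monoid_mult \<Rightarrow> bool" where
  "invertible e \<longleftrightarrow> (\<exists>y. e * y = 1 \<and> y * e = 1)"

definition minv :: "'q::monoid_mult \<Rightarrow> 'q" where
  "minv e = (THE y. e * y = 1 \<and> y * e = 1)"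

definition zpow :: "'q::monoid_mult \<Rightarrow> int \<Rightarrow> 'q" where
  "zpow e k = (if 0 \<le> k then e ^ nat k else (minv e) ^ nat (- k))"

definition is_basis :: "('k::field \<Rightarrow> 'q::comm_monoid_mult \<Rightarrow> 'q) \<Rightarrow> 'q set \<Rightarrow> bool" where
  "is_basis s E \<longleftrightarrow> finite E \<and> (\<forall>e\<in>E. invertible e) \<and>
     (\<forall>x. \<exists>!(\<mu>, k). (\<forall>e. e \<notin> E \<longrightarrow> k e = (0::int)) \<and> x = s \<mu> (\<Prod>e\<in>E. zpow e (k e)))"

definition quantity_space :: "('k::field \<Rightarrow> 'q::comm_monoid_mult \<Rightarrow> 'q) \<Rightarrow> bool" where
  "quantity_space s \<longleftrightarrow> scalable_monoid s \<and> (\<exists>E. is_basis s E)"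

definition qsim :: "('k \<Rightarrow> 'q \<Rightarrow> 'q) \<Rightarrow> 'q \<Rightarrow> 'q \<Rightarrow> bool" where
  "qsim s x y \<longleftrightarrow> (\<exists>\<alpha> \<beta>. s \<alpha> x = s \<beta> y)"

definition dims :: "('k \<Rightarrow> 'q \<Rightarrow> 'q) \<Rightarrow> 'q set set" where
  "dims s = UNIV // {(x, y). qsim s x y}"

definition dim_of :: "('k \<Rightarrow> 'q \<Rightarrow> 'q) \<Rightarrow> 'q \<Rightarrow> 'q set" where
  "dim_of s x = {y. qsim s x y}"

definition unit_element :: "('k \<Rightarrow> 'q \<Rightarrow> 'q) \<Rightarrow> 'q set \<Rightarrow> 'q \<Rightarrow> bool" where
  "unit_element s C u \<longleftrightarrow> u \<in> C \<and> (\<forall>x\<in>C. \<exists>m. x = s m u) \<and>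
     (\<forall>m m'. s m u = s m' u \<longrightarrow> m = m')"

definition qsum :: "('k::field \<Rightarrow> 'q \<Rightarrow> 'q) \<Rightarrow> 'q \<Rightarrow> 'q \<Rightarrow> 'q" where
  "qsum s x y = (let u = (SOME u. unit_element s (dim_of s x) u)
                 in s ((THE \<rho>. x = s \<rho> u) + (THE \<sigma>. y = s \<sigma> u)) u)"

end

theory Submission
  imports Defs
begin

text \<open>Every dimension of a quantity space has a unit element: the basis monomial occurring in the
  expansion of any of its members, since by uniqueness of expansions two quantities are of the
  same dimension exactly when they have the same monomial. The sum does not depend on the unit:
  if \<open>x = p\<cdot>w\<close> and \<open>y = q\<cdot>w\<close> for any \<open>w\<close>, then \<open>x + y = (p + q)\<cdot>w\<close>. Multiplying by \<open>z\<close> gives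
  \<open>xz = p\<cdot>(wz)\<close> and \<open>yz = q\<cdot>(wz)\<close>, so both sides of the distributive law equal \<open>(p + q)\<cdot>(wz)\<close>.\<close>

lemma scalable_monoid_one_scale: "scalable_monoid s \<Longrightarrow> s 1 x = x"
  unfolding scalable_monoid_def by blast

lemma scalable_monoid_scale_scale: "scalable_monoid s \<Longrightarrow> s a (s b x) = s (a * b) x"
  unfolding scalable_monoid_def by blast

lemma scalable_monoid_scale_mult_left: "scalable_monoid s \<Longrightarrow> s a x * y = s a (x * y)"
  unfolding scalable_monoid_def by (elim conjE allE) (rule sym, assumption)

lemma scalable_monoid_scale_mult_right: "scalable_monoid s \<Longrightarrow> x * s a y = s a (x * y)"
  unfolding scalable_monoid_def by (elim conjE allE) (rule sym, assumption)

lemma scalable_monoid_mem_dim_of_scale: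
  assumes "scalable_monoid s"
  shows "w \<in> dim_of s (s a w)"
  unfolding dim_of_def qsim_def mem_Collect_eq
  using scalable_monoid_one_scale[OF assms] by blast

definition basis_monomial :: "'q set \<Rightarrow> ('q \<Rightarrow> int) \<Rightarrow> 'q::comm_monoid_mult" where
  "basis_monomial E k = (\<Prod>e\<in>E. zpow e (k e))"

lemma is_basis_expansion_exists:
  assumes "is_basis s E"
  obtains \<mu> k where "\<forall>e. e \<notin> E \<longrightarrow> k e = 0" and "x = s \<mu> (basis_monomial E k)"
proof -
  obtain p where "case p of (\<mu>, k) \<Rightarrow> (\<forall>e. e \<notin> E \<longrightarrow> k e = 0) \<and> x = s \<mu> (basis_monomial E k)"
    using assms unfolding is_basis_def basis_monomial_def by (meson ex1_implies_ex)
  with that show thesis by (cases p) auto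
qed

lemma is_basis_expansion_unique:
  assumes "is_basis s E"
    and "\<forall>e. e \<notin> E \<longrightarrow> k e = 0" and "\<forall>e. e \<notin> E \<longrightarrow> k' e = 0"
    and "s \<mu> (basis_monomial E k) = s \<mu>' (basis_monomial E k')"
  shows "\<mu> = \<mu>'" and "k = k'"
proof -
  let ?expands = "\<lambda>(\<nu>, l). (\<forall>e. e \<notin> E \<longrightarrow> l e = 0) \<and>
      s \<mu> (basis_monomial E k) = s \<nu> (basis_monomial E l)"
  have "\<exists>!p. ?expands p"
    using assms(1) unfolding is_basis_def basis_monomial_def by blast
  moreover have "?expands (\<mu>, k)" and "?expands (\<mu>', k')"
    using assms(2-4) by auto
  ultimately have "(\<mu>, k) = (\<mu>', k')"
    unfolding ex1_iff_ex_Uniq by (blast dest: Uniq_D)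
  then show "\<mu> = \<mu>'" and "k = k'" by simp_all
qed

lemma quantity_space_unit_element_exists:
  assumes "quantity_space s"
  shows "\<exists>u. unit_element s (dim_of s x) u"
proof -
  have sm: "scalable_monoid s" and "\<exists>E. is_basis s E"
    using assms unfolding quantity_space_def by blast+
  then obtain E where E: "is_basis s E" by blast
  obtain \<mu> k where k: "\<forall>e. e \<notin> E \<longrightarrow> k e = 0" and x: "x = s \<mu> (basis_monomial E k)"
    using is_basis_expansion_exists[OF E] .
  have "unit_element s (dim_of s x) (basis_monomial E k)"
    unfolding unit_element_def
  proof (intro conjI ballI allI impI)
    show "basis_monomial E k \<in> dim_of s x"
      unfolding x by (rule scalable_monoid_mem_dim_of_scale[OF sm])
  next
    fix y assume "y \<in> dim_of s x"
    then obtain \<alpha> \<beta> where "s \<alpha> x = s \<beta> y" unfolding dim_of_def qsim_def by blast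
    obtain \<nu> l where l: "\<forall>e. e \<notin> E \<longrightarrow> l e = 0" and y: "y = s \<nu> (basis_monomial E l)"
      using is_basis_expansion_exists[OF E] .
    have "s (\<alpha> * \<mu>) (basis_monomial E k) = s (\<beta> * \<nu>) (basis_monomial E l)"
      using \<open>s \<alpha> x = s \<beta> y\<close> unfolding x y scalable_monoid_scale_scale[OF sm] .
    then have "k = l" by (rule is_basis_expansion_unique(2)[OF E k l])
    with y show "\<exists>m. y = s m (basis_monomial E k)" by blast
  next
    fix m m' assume "s m (basis_monomial E k) = s m' (basis_monomial E k)"
    then show "m = m'" by (rule is_basis_expansion_unique(1)[OF E k k])
  qed
  then show ?thesis by blast
qed

lemma dims_common_scale:
  assumes "quantity_space s" and "A \<in> dims s" and "x \<in> A" and "y \<in> A"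
  obtains w p q where "x = s p w" and "y = s q w"
proof -
  obtain a where "A = {(x, y). qsim s x y} `` {a}"
    using assms(2) unfolding dims_def by (rule quotientE)
  then have A: "A = dim_of s a" unfolding dim_of_def by auto
  obtain u where "unit_element s (dim_of s a) u"
    using quantity_space_unit_element_exists[OF assms(1)] by blast
  then show thesis
    using assms(3,4) that unfolding A unit_element_def by blast
qed

lemma qsum_scale:
  fixes s :: "'k::field \<Rightarrow> 'q::monoid_mult \<Rightarrow> 'q"
  assumes sm: "scalable_monoid s" and "\<exists>u. unit_element s (dim_of s (s a w)) u"
  shows "qsum s (s a w) (s c w) = s (a + c) w"
proof -
  define u where "u = (SOME u. unit_element s (dim_of s (s a w)) u)"
  have unit: "unit_element s (dim_of s (s a w)) u"
    unfolding u_def using assms(2) by (rule someI_ex)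
  then obtain m where w: "w = s m u"
    using scalable_monoid_mem_dim_of_scale[OF sm] unfolding unit_element_def by blast
  have coeff_unique: "\<And>p q. s p u = s q u \<Longrightarrow> p = q"
    using unit unfolding unit_element_def by blast
  have coeff: "(THE \<rho>. s b w = s \<rho> u) = b * m" for b
    unfolding w scalable_monoid_scale_scale[OF sm] by (rule the_equality) (auto dest: coeff_unique)
  have "qsum s (s a w) (s c w) = s (a * m + c * m) u"
    unfolding qsum_def Let_def u_def[symmetric] coeff ..
  also have "\<dots> = s (a + c) w"
    unfolding w scalable_monoid_scale_scale[OF sm] by (simp add: distrib_right)
  finally show ?thesis .
qed

theorem proposition3p11:
  fixes s :: "'k::field \<Rightarrow> 'q::comm_monoid_mult \<Rightarrow> 'q"
  assumes "quantity_space s"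
    and "A \<in> dims s" and "B \<in> dims s"
    and "x \<in> A" and "y \<in> A" and "z \<in> B"
  shows "qsum s x y * z = qsum s (x * z) (y * z) \<and> z * qsum s x y = qsum s (z * x) (z * y)"
proof -
  have sm: "scalable_monoid s" using assms(1) unfolding quantity_space_def by blast
  note sum = qsum_scale[OF sm quantity_space_unit_element_exists[OF assms(1)]]
  obtain w p q where x: "x = s p w" and y: "y = s q w"
    using dims_common_scale[OF assms(1,2,4,5)] .
  have "qsum s x y * z = s (p + q) (w * z)"
    unfolding x y sum scalable_monoid_scale_mult_left[OF sm] ..
  also have "\<dots> = qsum s (x * z) (y * z)"
    unfolding x y scalable_monoid_scale_mult_left[OF sm] sum ..
  finally have right: "qsum s x y * z = qsum s (x * z) (y * z)" .
  have "z * qsum s x y = s (p + q) (z * w)"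
    unfolding x y sum scalable_monoid_scale_mult_right[OF sm] ..
  also have "\<dots> = qsum s (z * x) (z * y)"
    unfolding x y scalable_monoid_scale_mult_right[OF sm] sum ..
  finally have left: "z * qsum s x y = qsum s (z * x) (z * y)" .
  from right left show ?thesis ..
qed

end
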